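(* Let $A\in\mathbb{R}^{d\times d}$ be orthogonal and let $(w_t)_{t\in\mathbb{N}_0}$ be mutually independent $\mathbb{R}^d$-valued random vectors with $\mathsf{E}[w_t]=0$, $\mathsf{E}[w_tw_t^{\mathrm T}]=Q_t$, and $\mathsf{E}[\|w_t\|^4]\le C_4$ for all $t$, for some $C_4>0$. Consider the system $y_{t+1}=Ay_t+u_t+w_t$ with $y_t,u_t\in\mathbb{R}^d$. Then there exist a constant $r>0$ and a measurable map $f:\mathbb{R}^d\to\mathbb{R}^d$ with $\|f(y)\|\le r$ for all $y\in\mathbb{R}^d$ such that the closed-loop system $$y_{t+1}=Ay_t+f(y_t)+w_t,\qquad y_0=x,$$ satisfies $\sup_{t\in\mathbb{N}_0}\mathsf{E}_x[\|y_t\|^2]<\infty$ for every $x\in\mathbb{R}^d$.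
   Context: $\|\cdot\|$ is the Euclidean norm; $\mathsf{E}_x$ is expectation given the initial condition $x$. *)

theory Defs
  imports "HOL-Probability.Probability"
begin

primrec closed_loop ::
  "real^'n^'n \<Rightarrow> (real^'n \<Rightarrow> real^'n) \<Rightarrow> (nat \<Rightarrow> 'a \<Rightarrow> real^'n) \<Rightarrow> real^'n \<Rightarrow> nat \<Rightarrow> 'a \<Rightarrow> real^'n"
where
  "closed_loop A f w x 0 = (\<lambda>\<omega>. x)"
| "closed_loop A f w x (Suc t) =
     (\<lambda>\<omega>. A *v closed_loop A f w x t \<omega> + f (closed_loop A f w x t \<omega>) + w t \<omega>)"

end

theory Submission
  imports Defs
begin

text \<open>The saturated feedback removes from \<open>A y\<close> a vector of length \<open>a\<close> along it, so the
  noise-free closed loop shrinks norms by \<open>a\<close> outside the ball of radius \<open>a\<close>. Follow the mean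
  squared excess \<open>E[(|y\<^sub>k| - a n)\<^sub>+\<^sup>2]\<close> of the state over the radius \<open>a n\<close>: one noisy
  step from radius \<open>a (n + 1)\<close> to \<open>a n\<close> costs only \<open>O((1 + E|y\<^sub>k|\<^sup>2) / n\<^sup>2)\<close>, because
  zero-mean noise adds just its variance to the smooth squared excess, and far outside the
  ball a harmful jump must have size of order \<open>a n\<close>, which the fourth moment controls.
  Along a horizon \<open>t\<close> these costs add up to a multiple of \<open>\<Sum> 1/n\<^sup>2 < 2\<close>; for
  \<open>a\<^sup>2 \<ge> 16 (1 + C4)\<close> the resulting bound on \<open>E|y\<^sub>t|\<^sup>2\<close> reproduces itself by induction
  on \<open>t\<close>.\<close>

lemma norm_orthogonal_matrix_mult:
  fixes A :: "real^'n^'n"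
  assumes "orthogonal_matrix A"
  shows "norm (A *v y) = norm y"
proof -
  have "orthogonal_transformation ((*v) A)"
    using assms by (simp add: orthogonal_transformation_matrix matrix_of_matrix_vector_mul)
  then show ?thesis by (rule orthogonal_transformation_norm)
qed

definition saturated_feedback :: "real \<Rightarrow> real^'n^'n \<Rightarrow> real^'n \<Rightarrow> real^'n" where
  "saturated_feedback a A y = - min 1 (a / norm y) *\<^sub>R (A *v y)"

lemma norm_saturated_feedback_le:
  assumes "orthogonal_matrix A" "a > 0"
  shows "norm (saturated_feedback a A y) \<le> a"
proof (cases "y = 0")
  case False
  then have "norm (saturated_feedback a A y) = min 1 (a / norm y) * norm y"
    using assms by (simp add: saturated_feedback_def norm_orthogonal_matrix_mult)
  also have "\<dots> \<le> a / norm y * norm y" by (intro mult_right_mono) auto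
  finally show ?thesis using False by simp
qed (use assms in \<open>simp add: saturated_feedback_def\<close>)

lemma norm_saturated_closed_loop_le:
  assumes "orthogonal_matrix A" "a > 0"
  shows "norm (A *v y + saturated_feedback a A y) \<le> max 0 (norm y - a)"
proof -
  have "A *v y + saturated_feedback a A y = (1 - min 1 (a / norm y)) *\<^sub>R (A *v y)"
    by (simp add: saturated_feedback_def algebra_simps)
  then have "norm (A *v y + saturated_feedback a A y) = (1 - min 1 (a / norm y)) * norm y"
    using assms by (simp add: norm_orthogonal_matrix_mult)
  also have "\<dots> \<le> max 0 (norm y - a)"
  proof (cases "norm y \<le> a")
    case True
    then have "y = 0 \<or> min 1 (a / norm y) = 1" by (auto simp: min_def)
    then show ?thesis by auto
  next
    case False
    then have "a / norm y < 1" using assms by (simp add: divide_less_eq)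
    then have "min 1 (a / norm y) = a / norm y" by (simp add: min_def)
    moreover have "(1 - a / norm y) * norm y = norm y - a"
      using False assms by (cases "y = 0") (simp_all add: field_simps)
    ultimately show ?thesis by simp
  qed
  finally show ?thesis .
qed

lemma borel_measurable_matrix_vector_mult [measurable]:
  fixes A :: "real^'n^'m"
  shows "(*v) A \<in> borel_measurable borel"
  by (intro borel_measurable_continuous_onI linear_continuous_on matrix_vector_mul_bounded_linear)

lemma borel_measurable_saturated_feedback [measurable]:
  "saturated_feedback a A \<in> borel_measurable borel"
  unfolding saturated_feedback_def by measurable

text \<open>\<open>(max 0 (norm v - c))\<^sup>2\<close> is the squared distance from \<open>v\<close> to \<open>cball 0 c\<close>; its gradient
  \<open>2 max 0 (norm v - c) sgn v\<close> is 2-Lipschitz, whence this second-order bound.\<close>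

lemma excess_sq_add_le:
  fixes v w :: "'a::real_inner"
  assumes "c \<ge> 0"
  shows "(max 0 (norm (v + w) - c))\<^sup>2
    \<le> (max 0 (norm v - c))\<^sup>2 + 2 * inner (max 0 (norm v - c) *\<^sub>R sgn v) w + (norm w)\<^sup>2"
proof (cases "norm v \<le> c")
  case True
  have "max 0 (norm (v + w) - c) \<le> norm w"
    using norm_triangle_ineq[of v w] True by auto
  then show ?thesis using True by (simp add: power_mono)
next
  case False
  let ?N = "norm (v + w)"
  have v0: "v \<noteq> 0" using False assms by auto
  have vw: "inner v w = norm v * inner (sgn v) w"
    using v0 by (simp add: sgn_div_norm)
  have "inner (sgn v) (v + w) \<le> ?N"
    using Cauchy_Schwarz_ineq2[of "sgn v" "v + w"] v0 by (simp add: norm_sgn)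
  moreover have "inner (sgn v) v = norm v"
    using v0 by (simp add: sgn_div_norm dot_square_norm power2_eq_square)
  ultimately have "norm v + inner (sgn v) w \<le> ?N"
    by (simp add: inner_add_right)
  then have "c * norm v + c * inner (sgn v) w \<le> c * ?N"
    using assms by (metis distrib_left mult_left_mono)
  moreover have "?N\<^sup>2 = (norm v)\<^sup>2 + 2 * (norm v * inner (sgn v) w) + (norm w)\<^sup>2"
    using vw by (simp add: power2_norm_eq_inner inner_add_left inner_add_right inner_commute)
  moreover have "(?N - c)\<^sup>2 = ?N\<^sup>2 - 2 * (c * ?N) + c\<^sup>2"
    by (simp add: power2_eq_square algebra_simps)
  moreover have "(max 0 (norm v - c))\<^sup>2 + 2 * inner (max 0 (norm v - c) *\<^sub>R sgn v) w + (norm w)\<^sup>2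
      = (norm v)\<^sup>2 - 2 * (c * norm v) + c\<^sup>2 + 2 * (norm v * inner (sgn v) w)
        - 2 * (c * inner (sgn v) w) + (norm w)\<^sup>2"
    using False by (simp add: max_def power2_eq_square algebra_simps)
  moreover have "(max 0 (?N - c))\<^sup>2 \<le> (?N - c)\<^sup>2"
    by (cases "?N \<le> c") (auto simp: max_def)
  ultimately show ?thesis by linarith
qed

lemma excess_sq_le_fourth_power:
  fixes v w :: "'a::real_normed_vector"
  assumes "norm v < c"
  shows "(max 0 (norm (v + w) - c))\<^sup>2 \<le> (norm w) ^ 4 / (c - norm v)\<^sup>2"
proof (cases "norm w \<le> c - norm v")
  case True
  then show ?thesis using norm_triangle_ineq[of v w] by simp
next
  case False
  let ?d = "c - norm v"
  have d: "0 < ?d" "?d < norm w" using False assms by auto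
  have "max 0 (norm (v + w) - c) \<le> norm w"
    using norm_triangle_ineq[of v w] d by auto
  then have "(max 0 (norm (v + w) - c))\<^sup>2 \<le> (norm w)\<^sup>2"
    by (simp add: power_mono)
  also have "\<dots> = (norm w) ^ 4 / (norm w)\<^sup>2"
    using d by (simp add: power2_eq_square power4_eq_xxxx)
  also have "\<dots> \<le> (norm w) ^ 4 / ?d\<^sup>2"
    using d by (intro divide_left_mono power_mono mult_pos_pos) auto
  finally show ?thesis .
qed

lemma second_moment_le_fourth_moment:
  fixes X :: "'a \<Rightarrow> real"
  assumes "prob_space M" "X \<in> borel_measurable M" "integrable M (\<lambda>\<omega>. X \<omega> ^ 4)"
  shows "integrable M (\<lambda>\<omega>. (X \<omega>)\<^sup>2)" and "(\<integral>\<omega>. (X \<omega>)\<^sup>2 \<partial>M) \<le> 1 + (\<integral>\<omega>. X \<omega> ^ 4 \<partial>M)"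
proof -
  interpret prob_space M by (rule assms(1))
  have sq_le: "x\<^sup>2 \<le> 1 + x ^ 4" for x :: real
  proof -
    have "0 \<le> (x\<^sup>2 - 1/2)\<^sup>2" by simp
    moreover have "x ^ 4 = (x\<^sup>2)\<^sup>2" by simp
    ultimately show ?thesis by (simp add: power2_eq_square algebra_simps)
  qed
  show int: "integrable M (\<lambda>\<omega>. (X \<omega>)\<^sup>2)"
  proof (rule Bochner_Integration.integrable_bound)
    show "integrable M (\<lambda>\<omega>. 1 + X \<omega> ^ 4)" using assms(3) by simp
    show "AE \<omega> in M. norm ((X \<omega>)\<^sup>2) \<le> norm (1 + X \<omega> ^ 4)"
      using sq_le by (auto intro!: AE_I2)
  qed (use assms(2) in measurable)
  have "(\<integral>\<omega>. (X \<omega>)\<^sup>2 \<partial>M) \<le> (\<integral>\<omega>. 1 + X \<omega> ^ 4 \<partial>M)"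
    using int assms(3) sq_le by (intro integral_mono) auto
  then show "(\<integral>\<omega>. (X \<omega>)\<^sup>2 \<partial>M) \<le> 1 + (\<integral>\<omega>. X \<omega> ^ 4 \<partial>M)"
    using assms(3) by (simp add: prob_space)
qed

lemma nn_integral_excess_sq_le_second_moment:
  fixes W :: "'a \<Rightarrow> 'b::euclidean_space"
  assumes "prob_space M" "integrable M W" "(\<integral>\<omega>. W \<omega> \<partial>M) = 0"
    and "integrable M (\<lambda>\<omega>. (norm (W \<omega>))\<^sup>2)" and "c \<ge> 0"
  shows "(\<integral>\<^sup>+\<omega>. ennreal ((max 0 (norm (v + W \<omega>) - c))\<^sup>2) \<partial>M)
    \<le> ennreal ((max 0 (norm v - c))\<^sup>2 + (\<integral>\<omega>. (norm (W \<omega>))\<^sup>2 \<partial>M))"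
proof -
  interpret prob_space M by (rule assms(1))
  define u where "u = max 0 (norm v - c) *\<^sub>R sgn v"
  define R where "R \<omega> = (max 0 (norm v - c))\<^sup>2 + 2 * inner u (W \<omega>) + (norm (W \<omega>))\<^sup>2" for \<omega>
  have le_R: "(max 0 (norm (v + W \<omega>) - c))\<^sup>2 \<le> R \<omega>" for \<omega>
    unfolding R_def u_def using assms(5) by (rule excess_sq_add_le)
  have "integrable M R"
    unfolding R_def using assms(2,4) by auto
  moreover have "(\<integral>\<omega>. R \<omega> \<partial>M) = (max 0 (norm v - c))\<^sup>2 + (\<integral>\<omega>. (norm (W \<omega>))\<^sup>2 \<partial>M)"
    unfolding R_def using assms(2-4) by (simp add: prob_space)
  moreover have "(\<integral>\<^sup>+\<omega>. ennreal ((max 0 (norm (v + W \<omega>) - c))\<^sup>2) \<partial>M)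
      \<le> (\<integral>\<^sup>+\<omega>. ennreal (R \<omega>) \<partial>M)"
    using le_R by (intro nn_integral_mono ennreal_leI)
  moreover have "(\<integral>\<^sup>+\<omega>. ennreal (R \<omega>) \<partial>M) = ennreal (\<integral>\<omega>. R \<omega> \<partial>M)"
    using le_R \<open>integrable M R\<close>
    by (intro nn_integral_eq_integral) (auto intro: order_trans[OF zero_le_power2])
  ultimately show ?thesis by simp
qed

lemma nn_integral_excess_sq_le_fourth_moment:
  fixes W :: "'a \<Rightarrow> 'b::real_normed_vector"
  assumes "integrable M (\<lambda>\<omega>. norm (W \<omega>) ^ 4)" and "norm v < c"
  shows "(\<integral>\<^sup>+\<omega>. ennreal ((max 0 (norm (v + W \<omega>) - c))\<^sup>2) \<partial>M)
    \<le> ennreal ((\<integral>\<omega>. norm (W \<omega>) ^ 4 \<partial>M) / (c - norm v)\<^sup>2)"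
proof -
  have "(\<integral>\<^sup>+\<omega>. ennreal ((max 0 (norm (v + W \<omega>) - c))\<^sup>2) \<partial>M)
      \<le> (\<integral>\<^sup>+\<omega>. ennreal (norm (W \<omega>) ^ 4 / (c - norm v)\<^sup>2) \<partial>M)"
    using assms(2) by (intro nn_integral_mono ennreal_leI excess_sq_le_fourth_power)
  also have "\<dots> = ennreal (\<integral>\<omega>. norm (W \<omega>) ^ 4 / (c - norm v)\<^sup>2 \<partial>M)"
    using assms(1) by (intro nn_integral_eq_integral) auto
  finally show ?thesis by simp
qed

lemma nn_integral_excess_sq_step:
  fixes W :: "'a \<Rightarrow> 'b::euclidean_space"
  assumes "prob_space M" and "W \<in> borel_measurable M" and "integrable M W"
    and "(\<integral>\<omega>. W \<omega> \<partial>M) = 0" and "integrable M (\<lambda>\<omega>. norm (W \<omega>) ^ 4)"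
    and "(\<integral>\<omega>. norm (W \<omega>) ^ 4 \<partial>M) \<le> C4"
    and "a > 0" and "N \<ge> 1" and "norm v \<le> max 0 (s - a)"
  shows "(\<integral>\<^sup>+\<omega>. ennreal ((max 0 (norm (v + W \<omega>) - a * (N - 1)))\<^sup>2) \<partial>M)
    \<le> ennreal ((max 0 (s - a * N))\<^sup>2 + (4 * C4 / a\<^sup>2 + 9 * (1 + C4) + 4 * (1 + C4) / a\<^sup>2 * s\<^sup>2) / N\<^sup>2)"
    (is "?L \<le> ennreal (?U + ?err)")
proof -
  interpret prob_space M by (rule assms(1))
  have "(\<lambda>\<omega>. norm (W \<omega>)) \<in> borel_measurable M" using assms(2) by measurable
  note second_moment = second_moment_le_fourth_moment[OF assms(1) this assms(5)]
  have "0 \<le> (\<integral>\<omega>. norm (W \<omega>) ^ 4 \<partial>M)" by simp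
  then have "C4 \<ge> 0" using assms(6) by linarith
  have N_pos: "N > 0" using assms(8) by simp
  txt \<open>Far outside the ball only a jump of size at least \<open>a N / 2\<close> matters, and the
    fourth moment bounds its contribution; otherwise the error term dominates the variance.\<close>
  consider "3 \<le> N" "s \<le> a * N / 2" | "N < 3 \<or> a * N / 2 < s" by linarith
  then show ?thesis
  proof cases
    case 1
    have d: "a * N / 2 \<le> a * (N - 1) - norm v"
    proof (cases "a \<le> s")
      case True
      then have "norm v \<le> s - a" using assms(9) by simp
      then show ?thesis using 1 by (simp add: algebra_simps)
    next
      case False
      then have "v = 0" using assms(9) by simp
      moreover have "0 \<le> a * (N / 2 - 1)" using 1 assms(7) by simp
      ultimately show ?thesis by (simp add: algebra_simps)
    qed
    have "0 < a * N / 2" using N_pos assms(7) by simp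
    then have "?L \<le> ennreal ((\<integral>\<omega>. norm (W \<omega>) ^ 4 \<partial>M) / (a * (N - 1) - norm v)\<^sup>2)"
      using d assms(5) by (intro nn_integral_excess_sq_le_fourth_moment) auto
    also have "\<dots> \<le> ennreal (C4 / (a * N / 2)\<^sup>2)"
      using d N_pos assms(6,7) \<open>C4 \<ge> 0\<close>
      by (intro ennreal_leI frac_le power_mono) auto
    also have "\<dots> \<le> ennreal (?U + ?err)"
      using N_pos assms(7) \<open>C4 \<ge> 0\<close>
      by (intro ennreal_leI) (simp add: field_simps power2_eq_square add_nonneg_nonneg)
    finally show ?thesis .
  next
    case 2
    have err_split: "?err = 4 * C4 / a\<^sup>2 / N\<^sup>2 + 9 * (1 + C4) / N\<^sup>2 + 4 * (1 + C4) / a\<^sup>2 * s\<^sup>2 / N\<^sup>2"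
      by (simp add: add_divide_distrib)
    have "0 \<le> 4 * C4 / a\<^sup>2 / N\<^sup>2" "0 \<le> 9 * (1 + C4) / N\<^sup>2" "0 \<le> 4 * (1 + C4) / a\<^sup>2 * s\<^sup>2 / N\<^sup>2"
      using \<open>C4 \<ge> 0\<close> by simp_all
    note err_terms = err_split this
    from 2 have moment: "1 + C4 \<le> ?err"
    proof
      assume "N < 3"
      then have "N\<^sup>2 \<le> 3\<^sup>2" using N_pos by (intro power_mono) auto
      then have "(1 + C4) * N\<^sup>2 \<le> (1 + C4) * 9"
        using \<open>C4 \<ge> 0\<close> by (intro mult_left_mono) auto
      then have "1 + C4 \<le> 9 * (1 + C4) / N\<^sup>2"
        using N_pos by (simp add: pos_le_divide_eq mult.commute)
      then show ?thesis using err_terms by linarith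
    next
      assume "a * N / 2 < s"
      then have "(a * N / 2)\<^sup>2 \<le> s\<^sup>2" using N_pos assms(7) by (intro power_mono) auto
      then have "(1 + C4) * (a\<^sup>2 * N\<^sup>2) \<le> (1 + C4) * (4 * s\<^sup>2)"
        using \<open>C4 \<ge> 0\<close> by (intro mult_left_mono) (auto simp: power_mult_distrib power_divide)
      moreover have "4 * (1 + C4) / a\<^sup>2 * s\<^sup>2 / N\<^sup>2 = (1 + C4) * (4 * s\<^sup>2) / (a\<^sup>2 * N\<^sup>2)"
        by simp
      moreover have "0 < a\<^sup>2 * N\<^sup>2" using N_pos assms(7) by simp
      ultimately have "1 + C4 \<le> 4 * (1 + C4) / a\<^sup>2 * s\<^sup>2 / N\<^sup>2"
        by (simp only: pos_le_divide_eq)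
      then show ?thesis using err_terms by linarith
    qed
    have "norm v - a * (N - 1) \<le> max 0 (s - a * N)"
    proof (cases "a \<le> s")
      case True
      then have "norm v - a * (N - 1) \<le> s - a * N" using assms(9) by (simp add: algebra_simps)
      then show ?thesis by linarith
    next
      case False
      then have "v = 0" using assms(9) by simp
      moreover have "0 \<le> a * (N - 1)" using assms(7,8) by simp
      ultimately show ?thesis by simp
    qed
    then have "max 0 (norm v - a * (N - 1)) \<le> max 0 (s - a * N)" by simp
    then have "(max 0 (norm v - a * (N - 1)))\<^sup>2 \<le> ?U" by (simp add: power_mono)
    then have "(max 0 (norm v - a * (N - 1)))\<^sup>2 + (\<integral>\<omega>. (norm (W \<omega>))\<^sup>2 \<partial>M) \<le> ?U + ?err"
      using second_moment(2) assms(6) moment by linarith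
    moreover have "?L \<le> ennreal ((max 0 (norm v - a * (N - 1)))\<^sup>2 + (\<integral>\<omega>. (norm (W \<omega>))\<^sup>2 \<partial>M))"
      using assms(1,3,4,7,8) second_moment(1)
      by (intro nn_integral_excess_sq_le_second_moment) auto
    ultimately show ?thesis using ennreal_leI order_trans by blast
  qed
qed

lemma nn_integral_indep_var_pair:
  fixes Y :: "'a \<Rightarrow> 'b::topological_space" and Z :: "'a \<Rightarrow> 'b"
  assumes "prob_space M" and "prob_space.indep_var M borel Y borel Z"
    and F: "F \<in> borel_measurable (borel \<Otimes>\<^sub>M borel)"
  shows "(\<integral>\<^sup>+\<omega>. F (Y \<omega>, Z \<omega>) \<partial>M) = (\<integral>\<^sup>+\<omega>. (\<integral>\<^sup>+\<omega>'. F (Y \<omega>, Z \<omega>') \<partial>M) \<partial>M)"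
proof -
  interpret prob_space M by (rule assms(1))
  have Y: "Y \<in> borel_measurable M" and Z: "Z \<in> borel_measurable M"
    and joint: "distr M borel Y \<Otimes>\<^sub>M distr M borel Z = distr M (borel \<Otimes>\<^sub>M borel) (\<lambda>x. (Y x, Z x))"
    using assms(2) unfolding indep_var_distribution_eq by auto
  interpret DZ: prob_space "distr M borel Z" using Z by (rule prob_space_distr)
  have "(\<integral>\<^sup>+\<omega>. F (Y \<omega>, Z \<omega>) \<partial>M) = (\<integral>\<^sup>+p. F p \<partial>distr M (borel \<Otimes>\<^sub>M borel) (\<lambda>x. (Y x, Z x)))"
    using Y Z F by (subst nn_integral_distr) auto
  also have "\<dots> = (\<integral>\<^sup>+y. (\<integral>\<^sup>+z. F (y, z) \<partial>distr M borel Z) \<partial>distr M borel Y)"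
    using F by (simp add: joint[symmetric] DZ.nn_integral_fst[symmetric] sets_pair_measure_cong)
  also have "\<dots> = (\<integral>\<^sup>+\<omega>. (\<integral>\<^sup>+z. F (Y \<omega>, z) \<partial>distr M borel Z) \<partial>M)"
    using Y F by (subst nn_integral_distr) (auto intro!: DZ.borel_measurable_nn_integral_fst)
  also have "\<dots> = (\<integral>\<^sup>+\<omega>. (\<integral>\<^sup>+\<omega>'. F (Y \<omega>, Z \<omega>') \<partial>M) \<partial>M)"
    using Z F by (intro nn_integral_cong) (simp add: nn_integral_distr)
  finally show ?thesis .
qed

lemma closed_loop_noise_coordinates:
  "closed_loop A f w x k \<omega> = closed_loop A f (\<lambda>i z. z i) x k (\<lambda>i. w i \<omega>)"
  by (induction k) auto

lemma closed_loop_coordinates_restrict: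
  "k \<le> m \<Longrightarrow> closed_loop A f (\<lambda>i z. z i) x k z = closed_loop A f (\<lambda>i z. z i) x k (restrict z {..<m})"
  by (induction k) auto

lemma measurable_closed_loop_coordinates:
  assumes f: "f \<in> borel_measurable borel" and "k \<le> m"
  shows "closed_loop A f (\<lambda>i z. z i) x k \<in> borel_measurable (PiM {..<m} (\<lambda>_. borel))"
  using \<open>k \<le> m\<close>
proof (induction k)
  case (Suc k)
  have [measurable]: "closed_loop A f (\<lambda>i z. z i) x k \<in> borel_measurable (PiM {..<m} (\<lambda>_. borel))"
    using Suc by simp
  have [measurable]: "(\<lambda>z. z k) \<in> borel_measurable (PiM {..<m} (\<lambda>_. borel))"
    using Suc by (intro measurable_component_singleton) auto
  show ?case using f by simp
qed simp

lemma indep_var_closed_loop_noise: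
  fixes w :: "nat \<Rightarrow> 'a \<Rightarrow> real^'n"
  assumes "prob_space M" and "prob_space.indep_vars M (\<lambda>_. borel) w UNIV"
    and f: "f \<in> borel_measurable borel"
  shows "prob_space.indep_var M borel (closed_loop A f w x k) borel (w k)"
proof -
  interpret prob_space M by (rule assms(1))
  define past where "past \<omega> = restrict (\<lambda>i. w i \<omega>) {..<k}" for \<omega>
  define now where "now \<omega> = restrict (\<lambda>i. w i \<omega>) {k}" for \<omega>
  define K where "K = case_bool {..<k} {k}"
  have "indep_vars (\<lambda>j. PiM (K j) (\<lambda>_. borel)) (\<lambda>j \<omega>. restrict (\<lambda>i. w i \<omega>) (K j)) UNIV"
    using assms(2) by (rule indep_vars_restrict) (auto simp: K_def disjoint_family_on_def split: bool.splits)
  moreover have "(\<lambda>j. PiM (K j) (\<lambda>_. borel)) = case_bool (PiM {..<k} (\<lambda>_. borel)) (PiM {k} (\<lambda>_. borel))"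
    and "(\<lambda>j \<omega>. restrict (\<lambda>i. w i \<omega>) (K j)) = case_bool past now"
    by (auto simp: K_def past_def now_def fun_eq_iff split: bool.splits)
  ultimately have "indep_var (PiM {..<k} (\<lambda>_. borel)) past (PiM {k} (\<lambda>_. borel)) now"
    unfolding indep_var_def by metis
  moreover have "closed_loop A f (\<lambda>i z. z i) x k \<in> borel_measurable (PiM {..<k} (\<lambda>_. borel))"
    using f by (rule measurable_closed_loop_coordinates) simp
  moreover have "(\<lambda>z. z k) \<in> borel_measurable (PiM {k} (\<lambda>_. borel :: (real^'n) measure))"
    by (intro measurable_component_singleton) auto
  ultimately have "indep_var borel (closed_loop A f (\<lambda>i z. z i) x k \<circ> past) borel ((\<lambda>z. z k) \<circ> now)"
    by (rule indep_var_compose)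
  moreover have "closed_loop A f (\<lambda>i z. z i) x k \<circ> past = closed_loop A f w x k"
    by (rule ext) (simp add: past_def closed_loop_noise_coordinates[of A f w]
        closed_loop_coordinates_restrict[of k k, symmetric])
  moreover have "(\<lambda>z. z k) \<circ> now = w k"
    by (rule ext) (simp add: now_def)
  ultimately show ?thesis by simp
qed

lemma sum_inverse_squares_le_2: "(\<Sum>i\<in>{0<..n}. 1 / (real i)\<^sup>2) \<le> 2"
proof -
  have "{0<..n} = Suc ` {..<n}" by (auto simp: image_iff gr0_conv_Suc)
  then have "(\<Sum>i\<in>{0<..n}. 1 / (real i)\<^sup>2) = (\<Sum>i<n. 1 / (1 + real i)\<^sup>2)"
    by (simp add: sum.reindex)
  also have "\<dots> \<le> (\<Sum>i. 1 / (1 + real i)\<^sup>2)"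
    using sums_summable[OF inverse_squares_sums] by (intro sum_le_suminf) auto
  also have "\<dots> = pi\<^sup>2 / 6" using sums_unique[OF inverse_squares_sums] by simp
  also have "\<dots> \<le> 2"
  proof -
    have "pi\<^sup>2 \<le> (16 / 5)\<^sup>2" using pi_approx(2) pi_gt_zero by (intro power_mono) auto
    also have "\<dots> = 256 / 25" by (simp add: power2_eq_square)
    finally show ?thesis by linarith
  qed
  finally show ?thesis .
qed

text \<open>Think of \<open>E k n\<close> as the mean squared excess of \<open>y\<^sub>k\<close> over radius \<open>a n\<close>: the steps
  along \<open>k + n = t\<close> telescope from \<open>E 0 t\<close> to the second moment \<open>E t 0\<close>, with the bound
  \<open>E k 0 \<le> B\<close> for \<open>k < t\<close> supplied by strong induction.\<close>

lemma bounded_if_excess_recursion: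
  fixes E :: "nat \<Rightarrow> nat \<Rightarrow> ennreal" and c K0 K1 :: real
  assumes step: "\<And>k n B. 0 \<le> B \<Longrightarrow> E k 0 \<le> ennreal B \<Longrightarrow>
      E (Suc k) n \<le> E k (Suc n) + ennreal ((K0 + K1 * B) / (real (Suc n))\<^sup>2)"
    and init: "\<And>n. E 0 n \<le> ennreal c"
    and "0 \<le> c" "0 \<le> K0" "0 \<le> K1" "K1 \<le> 1/4"
  shows "E t 0 \<le> ennreal (2 * c + 4 * K0)"
proof (induction t rule: less_induct)
  case (less t)
  define B where "B = 2 * c + 4 * K0"
  define D where "D = K0 + K1 * B"
  have "0 \<le> B" "0 \<le> D" using assms(3-5) by (simp_all add: B_def D_def)
  have telescope: "E j n \<le> E 0 (j + n) + ennreal (\<Sum>i\<in>{n<..j + n}. D / (real i)\<^sup>2)"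
    if "j \<le> t" for j n
    using that
  proof (induction j arbitrary: n)
    case (Suc j)
    have "E (Suc j) n \<le> E j (Suc n) + ennreal (D / (real (Suc n))\<^sup>2)"
      unfolding D_def using Suc.prems \<open>0 \<le> B\<close> by (intro step less.IH[folded B_def]) auto
    also have "\<dots> \<le> E 0 (j + Suc n) + ennreal (\<Sum>i\<in>{Suc n<..j + Suc n}. D / (real i)\<^sup>2)
        + ennreal (D / (real (Suc n))\<^sup>2)"
      using Suc.IH[of "Suc n"] Suc.prems by (intro add_right_mono) simp
    also have "(\<Sum>i\<in>{n<..Suc j + n}. D / (real i)\<^sup>2)
        = (\<Sum>i\<in>{Suc n<..j + Suc n}. D / (real i)\<^sup>2) + D / (real (Suc n))\<^sup>2"
    proof -
      have "{n<..Suc j + n} = insert (Suc n) {Suc n<..j + Suc n}" by auto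
      then show ?thesis by simp
    qed
    then have "ennreal (\<Sum>i\<in>{Suc n<..j + Suc n}. D / (real i)\<^sup>2) + ennreal (D / (real (Suc n))\<^sup>2)
        = ennreal (\<Sum>i\<in>{n<..Suc j + n}. D / (real i)\<^sup>2)"
      using \<open>0 \<le> D\<close> by (simp add: ennreal_plus sum_nonneg)
    then have "E 0 (j + Suc n) + ennreal (\<Sum>i\<in>{Suc n<..j + Suc n}. D / (real i)\<^sup>2)
        + ennreal (D / (real (Suc n))\<^sup>2) = E 0 (Suc j + n) + ennreal (\<Sum>i\<in>{n<..Suc j + n}. D / (real i)\<^sup>2)"
      by (simp add: add.assoc)
    finally show ?case .
  qed simp
  let ?S = "\<Sum>i\<in>{0<..t}. D / (real i)\<^sup>2"
  have "?S = D * (\<Sum>i\<in>{0<..t}. 1 / (real i)\<^sup>2)" by (simp add: sum_distrib_left)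
  also have "\<dots> \<le> D * 2" using sum_inverse_squares_le_2 \<open>0 \<le> D\<close> by (rule mult_left_mono)
  finally have "c + ?S \<le> B"
    using mult_right_mono[OF assms(6) \<open>0 \<le> B\<close>] by (simp add: B_def D_def)
  have "E t 0 \<le> E 0 t + ennreal ?S" using telescope[of t 0] by simp
  also have "\<dots> \<le> ennreal c + ennreal ?S" using init by (rule add_right_mono)
  also have "\<dots> = ennreal (c + ?S)" using \<open>0 \<le> c\<close> \<open>0 \<le> D\<close> by (simp add: ennreal_plus sum_nonneg)
  also have "\<dots> \<le> ennreal B" using \<open>c + ?S \<le> B\<close> by (rule ennreal_leI)
  finally show ?case unfolding B_def .
qed

lemma nn_integral_excess_sq_step_indep:
  fixes Y W :: "'a \<Rightarrow> 'b::euclidean_space"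
  assumes "prob_space M" and "prob_space.indep_var M borel Y borel W"
    and "integrable M W" and "(\<integral>\<omega>. W \<omega> \<partial>M) = 0"
    and "integrable M (\<lambda>\<omega>. norm (W \<omega>) ^ 4)" and "(\<integral>\<omega>. norm (W \<omega>) ^ 4 \<partial>M) \<le> C4"
    and g: "g \<in> borel_measurable borel" and drift: "\<And>y. norm (g y) \<le> max 0 (norm y - a)"
    and "a > 0" and "N \<ge> 1" and "0 \<le> B"
    and second_moment: "(\<integral>\<^sup>+\<omega>. ennreal ((norm (Y \<omega>))\<^sup>2) \<partial>M) \<le> ennreal B"
  shows "(\<integral>\<^sup>+\<omega>. ennreal ((max 0 (norm (g (Y \<omega>) + W \<omega>) - a * (N - 1)))\<^sup>2) \<partial>M)
    \<le> (\<integral>\<^sup>+\<omega>. ennreal ((max 0 (norm (Y \<omega>) - a * N))\<^sup>2) \<partial>M)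
      + ennreal ((4 * C4 / a\<^sup>2 + 9 * (1 + C4) + 4 * (1 + C4) / a\<^sup>2 * B) / N\<^sup>2)"
proof -
  interpret prob_space M by (rule assms(1))
  define K0 where "K0 = (4 * C4 / a\<^sup>2 + 9 * (1 + C4)) / N\<^sup>2"
  define K1 where "K1 = 4 * (1 + C4) / a\<^sup>2 / N\<^sup>2"
  have "0 \<le> (\<integral>\<omega>. norm (W \<omega>) ^ 4 \<partial>M)" by simp
  then have "0 \<le> C4" using assms(6) by linarith
  then have "0 \<le> K0" "0 \<le> K1" by (simp_all add: K0_def K1_def)
  have W: "W \<in> borel_measurable M" using assms(2) by (rule indep_var_rv2)
  define F where "F p = ennreal ((max 0 (norm (g (fst p) + snd p) - a * (N - 1)))\<^sup>2)" for p :: "'b \<times> 'b"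
  have "F \<in> borel_measurable (borel \<Otimes>\<^sub>M borel)" unfolding F_def using g by measurable
  then have "(\<integral>\<^sup>+\<omega>. F (Y \<omega>, W \<omega>) \<partial>M) = (\<integral>\<^sup>+\<omega>. (\<integral>\<^sup>+\<omega>'. F (Y \<omega>, W \<omega>') \<partial>M) \<partial>M)"
    by (rule nn_integral_indep_var_pair[OF assms(1,2)])
  also have "\<dots> \<le> (\<integral>\<^sup>+\<omega>. ennreal ((max 0 (norm (Y \<omega>) - a * N))\<^sup>2)
      + (ennreal K0 + ennreal K1 * ennreal ((norm (Y \<omega>))\<^sup>2)) \<partial>M)"
  proof (rule nn_integral_mono)
    fix \<omega>
    have err: "(4 * C4 / a\<^sup>2 + 9 * (1 + C4) + 4 * (1 + C4) / a\<^sup>2 * (norm (Y \<omega>))\<^sup>2) / N\<^sup>2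
        = K0 + K1 * (norm (Y \<omega>))\<^sup>2"
      using assms(9,10) by (simp add: K0_def K1_def field_simps)
    have "(\<integral>\<^sup>+\<omega>'. F (Y \<omega>, W \<omega>') \<partial>M) \<le> ennreal ((max 0 (norm (Y \<omega>) - a * N))\<^sup>2
        + (4 * C4 / a\<^sup>2 + 9 * (1 + C4) + 4 * (1 + C4) / a\<^sup>2 * (norm (Y \<omega>))\<^sup>2) / N\<^sup>2)"
      unfolding F_def fst_conv snd_conv
      by (rule nn_integral_excess_sq_step[OF assms(1) W assms(3-6,9,10) drift])
    then have "(\<integral>\<^sup>+\<omega>'. F (Y \<omega>, W \<omega>') \<partial>M)
        \<le> ennreal ((max 0 (norm (Y \<omega>) - a * N))\<^sup>2 + (K0 + K1 * (norm (Y \<omega>))\<^sup>2))"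
      unfolding err .
    also have "\<dots> = ennreal ((max 0 (norm (Y \<omega>) - a * N))\<^sup>2)
        + (ennreal K0 + ennreal K1 * ennreal ((norm (Y \<omega>))\<^sup>2))"
      using \<open>0 \<le> K0\<close> \<open>0 \<le> K1\<close> by (simp add: ennreal_plus ennreal_mult)
    finally show "(\<integral>\<^sup>+\<omega>'. F (Y \<omega>, W \<omega>') \<partial>M) \<le> \<dots>" .
  qed
  also have "\<dots> = (\<integral>\<^sup>+\<omega>. ennreal ((max 0 (norm (Y \<omega>) - a * N))\<^sup>2) \<partial>M)
      + (ennreal K0 + ennreal K1 * (\<integral>\<^sup>+\<omega>. ennreal ((norm (Y \<omega>))\<^sup>2) \<partial>M))"
    using indep_var_rv1[OF assms(2)]
    by (simp add: nn_integral_add nn_integral_cmult emeasure_space_1)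
  also have "\<dots> \<le> (\<integral>\<^sup>+\<omega>. ennreal ((max 0 (norm (Y \<omega>) - a * N))\<^sup>2) \<partial>M)
      + ennreal (K0 + K1 * B)"
    using second_moment \<open>0 \<le> K0\<close> \<open>0 \<le> K1\<close> \<open>0 \<le> B\<close>
    by (simp add: ennreal_plus ennreal_mult add_left_mono mult_left_mono)
  also have "K0 + K1 * B = (4 * C4 / a\<^sup>2 + 9 * (1 + C4) + 4 * (1 + C4) / a\<^sup>2 * B) / N\<^sup>2"
    using assms(9,10) by (simp add: K0_def K1_def field_simps)
  finally show ?thesis by (simp add: F_def)
qed

lemma closed_loop_second_moment_le:
  fixes w :: "nat \<Rightarrow> 'a \<Rightarrow> real^'n" and A :: "real^'n^'n"
  assumes "prob_space M" and "prob_space.indep_vars M (\<lambda>_. borel) w UNIV"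
    and "\<And>t. integrable M (w t)" and "\<And>t. (\<integral>\<omega>. w t \<omega> \<partial>M) = 0"
    and "\<And>t. integrable M (\<lambda>\<omega>. norm (w t \<omega>) ^ 4)" and "\<And>t. (\<integral>\<omega>. norm (w t \<omega>) ^ 4 \<partial>M) \<le> C4"
    and f: "f \<in> borel_measurable borel" and drift: "\<And>y. norm (A *v y + f y) \<le> max 0 (norm y - a)"
    and "a > 0" and "16 * (1 + C4) \<le> a\<^sup>2"
  shows "(\<integral>\<^sup>+\<omega>. ennreal ((norm (closed_loop A f w x t \<omega>))\<^sup>2) \<partial>M)
    \<le> ennreal (2 * (norm x)\<^sup>2 + 4 * (4 * C4 / a\<^sup>2 + 9 * (1 + C4)))"
proof -
  interpret prob_space M by (rule assms(1))
  have "(\<lambda>y. A *v y + f y) \<in> borel_measurable borel" using f by measurable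
  note step = nn_integral_excess_sq_step_indep[OF assms(1)
      indep_var_closed_loop_noise[OF assms(1,2) f, of A x k for k] assms(3-6) this drift \<open>a > 0\<close>]
  define E where "E k n = (\<integral>\<^sup>+\<omega>. ennreal ((max 0 (norm (closed_loop A f w x k \<omega>) - a * real n))\<^sup>2) \<partial>M)"
    for k n
  have "0 \<le> (\<integral>\<omega>. norm (w 0 \<omega>) ^ 4 \<partial>M)" by simp
  then have "0 \<le> C4" using assms(6) by (rule order_trans)
  have "E t 0 \<le> ennreal (2 * (norm x)\<^sup>2 + 4 * (4 * C4 / a\<^sup>2 + 9 * (1 + C4)))"
  proof (rule bounded_if_excess_recursion)
    show "E (Suc k) n \<le> E k (Suc n)
        + ennreal ((4 * C4 / a\<^sup>2 + 9 * (1 + C4) + 4 * (1 + C4) / a\<^sup>2 * B) / (real (Suc n))\<^sup>2)"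
      if "0 \<le> B" and "E k 0 \<le> ennreal B" for k n B
      using step[of "real (Suc n)" B k] that by (simp add: E_def)
    have "(max 0 (norm x - a * real n))\<^sup>2 \<le> (norm x)\<^sup>2" for n
      using \<open>a > 0\<close> by (intro power_mono) auto
    then show "E 0 n \<le> ennreal ((norm x)\<^sup>2)" for n
      by (simp add: E_def emeasure_space_1 ennreal_leI)
    show "4 * (1 + C4) / a\<^sup>2 \<le> 1 / 4"
      using assms(10) \<open>a > 0\<close> by (simp add: field_simps)
  qed (use \<open>0 \<le> C4\<close> in auto)
  then show ?thesis by (simp add: E_def)
qed

theorem lemma4:
  fixes M :: "'a measure"
    and A :: "real^'n^'n"
    and w :: "nat \<Rightarrow> 'a \<Rightarrow> real^'n"
    and Q :: "nat \<Rightarrow> real^'n^'n"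
    and C4 :: real
  assumes "prob_space M"
    and "orthogonal_matrix A"
    and "\<And>t. w t \<in> borel_measurable M"
    and "prob_space.indep_vars M (\<lambda>_. borel) w UNIV"
    and "\<And>t. integrable M (w t)"
    and "\<And>t. (\<integral>\<omega>. w t \<omega> \<partial>M) = 0"
    and "\<And>t. integrable M (\<lambda>\<omega>. \<chi> i j. w t \<omega> $ i * w t \<omega> $ j)"
    and "\<And>t. (\<integral>\<omega>. (\<chi> i j. w t \<omega> $ i * w t \<omega> $ j) \<partial>M) = Q t"
    and "C4 > 0"
    and "\<And>t. integrable M (\<lambda>\<omega>. norm (w t \<omega>) ^ 4)"
    and "\<And>t. (\<integral>\<omega>. norm (w t \<omega>) ^ 4 \<partial>M) \<le> C4"
  shows "\<exists>r>0. \<exists>f :: real^'n \<Rightarrow> real^'n.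
           f \<in> borel_measurable borel \<and> (\<forall>y. norm (f y) \<le> r) \<and>
           (\<forall>x. (SUP t. \<integral>\<^sup>+ \<omega>. ennreal (norm (closed_loop A f w x t \<omega>) ^ 2) \<partial>M) < \<infinity>)"
proof -
  define a where "a = 4 * (1 + C4)"
  define f where "f = saturated_feedback a A"
  have "a > 0" using assms(9) by (simp add: a_def)
  have "16 * (1 + C4) * 1 \<le> 16 * (1 + C4) * (1 + C4)"
    using assms(9) by (intro mult_left_mono) auto
  also have "\<dots> = a\<^sup>2" by (simp add: a_def power2_eq_square algebra_simps)
  finally have "16 * (1 + C4) \<le> a\<^sup>2" by simp
  have "(SUP t. \<integral>\<^sup>+\<omega>. ennreal (norm (closed_loop A f w x t \<omega>) ^ 2) \<partial>M) < \<infinity>" for x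
  proof -
    have "(SUP t. \<integral>\<^sup>+\<omega>. ennreal (norm (closed_loop A f w x t \<omega>) ^ 2) \<partial>M)
        \<le> ennreal (2 * (norm x)\<^sup>2 + 4 * (4 * C4 / a\<^sup>2 + 9 * (1 + C4)))"
      unfolding f_def
      by (intro SUP_least closed_loop_second_moment_le[OF assms(1,4,5,6,10,11)]
          borel_measurable_saturated_feedback norm_saturated_closed_loop_le assms(2)
          \<open>a > 0\<close> \<open>16 * (1 + C4) \<le> a\<^sup>2\<close>)
    then show ?thesis using order.strict_trans1 by fastforce
  qed
  moreover have "\<forall>y. norm (f y) \<le> a"
    using norm_saturated_feedback_le[OF assms(2) \<open>a > 0\<close>] by (simp add: f_def)
  ultimately show ?thesis
    using \<open>a > 0\<close> borel_measurable_saturated_feedback unfolding f_def by blast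
qed

end
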